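(* For every integer $k\ge 1$ there exists an odd integer $N\ge 3$ such that the cycle $C_N$ is a strict prime $k$th-power distance graph.
   Context: A graph $G$ is a strict prime $k$th-power distance graph if there is an injective map $L:V(G)\to\mathbb{Z}$ such that for every edge $uv$ of $G$, $|L(u)-L(v)|=p^k$ for some prime $p$ (the prime may depend on the edge). *)

theory Defs
  imports Main "HOL-Computational_Algebra.Primes"
begin

definition strict_prime_power_distance_graph ::
  "nat \<Rightarrow> 'a set \<Rightarrow> ('a \<Rightarrow> 'a \<Rightarrow> bool) \<Rightarrow> bool" where
  "strict_prime_power_distance_graph k V E \<longleftrightarrow>
     (\<exists>L :: 'a \<Rightarrow> int. inj_on L V \<and>
        (\<forall>u\<in>V. \<forall>v\<in>V. E u v \<longrightarrow>
           (\<exists>p :: nat. prime p \<and> \<bar>L u - L v\<bar> = int p ^ k)))"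

definition cycle_vertices :: "nat \<Rightarrow> nat set" where
  "cycle_vertices N = {0..<N}"

definition cycle_edge :: "nat \<Rightarrow> nat \<Rightarrow> nat \<Rightarrow> bool" where
  "cycle_edge N u v \<longleftrightarrow> u < N \<and> v < N \<and> (v = (u + 1) mod N \<or> u = (v + 1) mod N)"

end

theory Submission
  imports Defs
begin

text \<open>For coprime \<open>a, b > 0\<close>, walk around the cycle \<open>C\<^sub>a\<^sub>+\<^sub>b\<close> with \<open>a\<close> steps of length \<open>b\<close>
  up from \<open>0\<close> to \<open>ab\<close> and then \<open>b\<close> steps of length \<open>a\<close> back down to \<open>0\<close>. An up-label \<open>ib\<close>
  can only meet a down-label \<open>ab - ta\<close> with \<open>0 < t < b\<close> if \<open>b\<close> divides \<open>ta\<close>, which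
  coprimality rules out; so the labelling is injective. Taking \<open>a = 3\<^sup>k\<close> and \<open>b = 2\<^sup>k\<close>
  makes every edge length a prime \<open>k\<close>th power, and \<open>3\<^sup>k + 2\<^sup>k\<close> is odd.\<close>

definition two_step_label :: "nat \<Rightarrow> nat \<Rightarrow> nat \<Rightarrow> int" where
  "two_step_label a b i =
     (if i \<le> a then int i * int b else int a * int b - int (i - a) * int a)"

lemma two_step_label_inj_on:
  assumes "coprime a b" "0 < a" "0 < b"
  shows "inj_on (two_step_label a b) {0..<a + b}"
proof -
  have up_ne_down: "two_step_label a b i \<noteq> two_step_label a b j"
    if "i \<le> a" "a < j" "j < a + b" for i j
  proof
    assume "two_step_label a b i = two_step_label a b j"
    with that have "int (i * b + (j - a) * a) = int (a * b)"
      by (simp add: two_step_label_def)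
    hence "i * b + (j - a) * a = a * b" by (simp only: of_nat_eq_iff)
    hence "b dvd (j - a) * a" by (metis dvd_add_right_iff dvd_triv_left dvd_triv_right)
    hence "b dvd j - a" using assms(1) by (simp add: coprime_commute coprime_dvd_mult_left_iff)
    with that show False by (simp add: nat_dvd_not_less)
  qed
  show ?thesis
  proof (rule inj_onI)
    fix i j
    assume "i \<in> {0..<a + b}" "j \<in> {0..<a + b}"
      and eq: "two_step_label a b i = two_step_label a b j"
    consider "i \<le> a" "j \<le> a" | "i \<le> a" "a < j" | "a < i" "j \<le> a" | "a < i" "a < j" by linarith
    then show "i = j"
    proof cases
      case 1 with eq assms show ?thesis by (simp add: two_step_label_def)
    next
      case 2 with eq up_ne_down \<open>j \<in> _\<close> show ?thesis by auto
    next
      case 3 with eq up_ne_down \<open>i \<in> _\<close> show ?thesis by (metis atLeastLessThan_iff)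
    next
      case 4 with eq assms show ?thesis by (simp add: two_step_label_def)
    qed
  qed
qed

lemma two_step_label_successor:
  assumes "0 < b" "u < a + b"
  shows "\<bar>two_step_label a b u - two_step_label a b ((u + 1) mod (a + b))\<bar> \<in> {int a, int b}"
proof (cases "u + 1 < a + b")
  case True
  then have "(u + 1) mod (a + b) = u + 1" by simp
  moreover have "Suc u - a = Suc (u - a)" if "\<not> u < a" using that by simp
  ultimately show ?thesis by (cases "u < a") (auto simp: two_step_label_def algebra_simps)
next
  case False
  with assms have "u + 1 = a + b" by simp
  then have "u = a + b - 1" "(u + 1) mod (a + b) = 0" by simp_all
  moreover have "two_step_label a b (a + b - 1) = int a"
    using assms by (cases "b = 1") (auto simp: two_step_label_def algebra_simps of_nat_diff)
  ultimately show ?thesis by (simp add: two_step_label_def)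
qed

lemma cycle_edge_two_step_label:
  assumes "0 < b" "cycle_edge (a + b) u v"
  shows "\<bar>two_step_label a b u - two_step_label a b v\<bar> \<in> {int a, int b}"
  using assms two_step_label_successor[OF \<open>0 < b\<close>]
  unfolding cycle_edge_def by (metis abs_minus_commute)

lemma cycle_of_prime_powers_distance_graph:
  assumes "prime p" "prime q" "p \<noteq> q"
  shows "strict_prime_power_distance_graph k
           (cycle_vertices (p ^ k + q ^ k)) (cycle_edge (p ^ k + q ^ k))"
proof -
  let ?L = "two_step_label (p ^ k) (q ^ k)"
  have "coprime (p ^ k) (q ^ k)" using assms by (simp add: primes_coprime)
  moreover have "0 < p ^ k" "0 < q ^ k" using assms by (simp_all add: prime_gt_0_nat)
  ultimately have "inj_on ?L (cycle_vertices (p ^ k + q ^ k))"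
    by (simp add: two_step_label_inj_on cycle_vertices_def)
  moreover have "\<exists>r::nat. prime r \<and> \<bar>?L u - ?L v\<bar> = int r ^ k"
    if "cycle_edge (p ^ k + q ^ k) u v" for u v
    using cycle_edge_two_step_label[OF \<open>0 < q ^ k\<close> that] assms by auto
  ultimately show ?thesis unfolding strict_prime_power_distance_graph_def by blast
qed

theorem mainTheorem15:
  fixes k :: nat
  assumes "k \<ge> 1"
  shows "\<exists>N::nat. odd N \<and> N \<ge> 3 \<and>
           strict_prime_power_distance_graph k (cycle_vertices N) (cycle_edge N)"
proof (intro exI conjI)
  show "odd (3 ^ k + 2 ^ k :: nat)" using assms by simp
  have "(3::nat) ^ 1 \<le> 3 ^ k" "(2::nat) ^ 1 \<le> 2 ^ k" using assms by (simp_all only: power_increasing)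
  then show "3 \<le> (3 ^ k + 2 ^ k :: nat)" by simp
  show "strict_prime_power_distance_graph k
          (cycle_vertices (3 ^ k + 2 ^ k)) (cycle_edge (3 ^ k + 2 ^ k))"
    by (rule cycle_of_prime_powers_distance_graph) simp_all
qed

end
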